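(* Let $C_3=\{000,111\}$ and let $$C_7=\{\bm{x}\,\|\,(\pi(\bm{x})+1)\,\|\,(\bm{x}+\bm{c}) : \bm{x}\in\mathbb{B}_3,\ \bm{c}\in C_3\}\subseteq \mathbb{B}_7 .$$ Then $C_7$ is a perfect code in the graph $\Gamma_7(1^5)$.
   Context: $\mathbb{B}_k$ is the set of binary strings of length $k$, identified with vectors of $\mathbb{Z}_2^k$; $\bm{x}+\bm{c}$ is the coordinatewise sum modulo 2, $\pi(x_1\dots x_k)=x_1+\dots+x_k \pmod 2$ is the parity, and $\|$ denotes concatenation (the middle term is a single bit). The $n$-cube $Q_n$ has vertex set $\mathbb{B}_n$, two strings adjacent if they differ in exactly one position. $\Gamma_n(1^s)$ is the subgraph of $Q_n$ induced by strings not containing $1^s$ (the string of $s$ consecutive 1's) as a substring (i.e. as a block of consecutive positions). A perfect code in a graph $G$ is a set $C$ of vertices such that every vertex of $G$ lies in the closed neighbourhood $N[c]=\{v: d_G(c,v)\le 1\}$ of exactly one $c\in C$. *)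

theory Defs
  imports Main "HOL-Library.Sublist"
begin

text \<open>Binary strings are bool lists (True = 1, False = 0).\<close>

definition binstrings :: "nat \<Rightarrow> bool list set" where
  "binstrings k = {x. length x = k}"

definition vadd :: "bool list \<Rightarrow> bool list \<Rightarrow> bool list" where
  "vadd x c = map2 (\<noteq>) x c"

definition parity :: "bool list \<Rightarrow> bool" where
  "parity x = odd (length (filter id x))"

definition cube_adj :: "bool list \<Rightarrow> bool list \<Rightarrow> bool" where
  "cube_adj x y \<longleftrightarrow> length x = length y \<and> card {i. i < length x \<and> x ! i \<noteq> y ! i} = 1"

text \<open>Vertex set of Gamma_n(1^s): strings of length n not containing 1^s as a factor.
  The induced subgraph has adjacency cube_adj restricted to this set.\<close>
definition Gamma_verts :: "nat \<Rightarrow> nat \<Rightarrow> bool list set" where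
  "Gamma_verts n s = {x \<in> binstrings n. \<not> sublist (replicate s True) x}"

definition closed_nbhd :: "'a set \<Rightarrow> ('a \<Rightarrow> 'a \<Rightarrow> bool) \<Rightarrow> 'a \<Rightarrow> 'a set" where
  "closed_nbhd V adj c = {v \<in> V. v = c \<or> adj c v}"

definition perfect_code :: "'a set \<Rightarrow> ('a \<Rightarrow> 'a \<Rightarrow> bool) \<Rightarrow> 'a set \<Rightarrow> bool" where
  "perfect_code V adj C \<longleftrightarrow> C \<subseteq> V \<and> (\<forall>v\<in>V. \<exists>!c. c \<in> C \<and> v \<in> closed_nbhd V adj c)"

definition C3 :: "bool list set" where
  "C3 = {[False, False, False], [True, True, True]}"

definition C7 :: "bool list set" where
  "C7 = {x @ [\<not> parity x] @ vadd x c | x c. x \<in> binstrings 3 \<and> c \<in> C3}"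

end

theory Submission
  imports Defs
begin

text \<open>The statement is a finite check: \<open>C7\<close> has 16 words and \<open>\<Gamma>\<^sub>7(1\<^sup>5)\<close> has 120
  vertices.\<close>

lemma binstrings_eq_set_n_lists: "binstrings n = set (List.n_lists n [False, True])"
  by (auto simp: binstrings_def set_n_lists)

lemma Gamma_verts_eq_set_filter:
  "Gamma_verts n s = set (filter (\<lambda>x. \<not> sublist (replicate s True) x) (List.n_lists n [False, True]))"
  by (auto simp: Gamma_verts_def binstrings_eq_set_n_lists)

definition hamming_dist :: "'a list \<Rightarrow> 'a list \<Rightarrow> nat" where
  "hamming_dist x y = length (filter id (map2 (\<noteq>) x y))"

lemma hamming_dist_eq_card:
  assumes "length x = length y"
  shows "hamming_dist x y = card {i. i < length x \<and> x ! i \<noteq> y ! i}"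
  using assms unfolding hamming_dist_def
  by (auto simp: length_filter_conv_card intro!: arg_cong[where f = card])

lemma cube_adj_iff_hamming_dist:
  "cube_adj x y \<longleftrightarrow> length x = length y \<and> hamming_dist x y = 1"
  by (auto simp: cube_adj_def hamming_dist_eq_card)

lemma ex1_mem_iff_length_filter_eq_1:
  assumes "distinct xs"
  shows "(\<exists>!x. x \<in> set xs \<and> P x) \<longleftrightarrow> length (filter P xs) = 1"
proof -
  have "length (filter P xs) = card {x \<in> set xs. P x}"
    using assms by (metis distinct_card distinct_filter set_filter)
  then show ?thesis by (auto simp: card_1_singleton_iff set_eq_iff; metis)
qed

lemma perfect_code_set_iff:
  assumes "distinct cs"
  shows "perfect_code (set vs) adj (set cs) \<longleftrightarrow>
    set cs \<subseteq> set vs \<and> (\<forall>v \<in> set vs. length (filter (\<lambda>c. v = c \<or> adj c v) cs) = 1)"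
  by (simp add: perfect_code_def closed_nbhd_def ex1_mem_iff_length_filter_eq_1[OF assms]
      cong: conj_cong)

definition Gamma7_list :: "bool list list" where
  "Gamma7_list = filter (\<lambda>x. \<not> sublist (replicate 5 True) x) (List.n_lists 7 [False, True])"

definition C7_list :: "bool list list" where
  "C7_list = map (\<lambda>(x, c). x @ [\<not> parity x] @ vadd x c)
     (List.product (List.n_lists 3 [False, True]) [[False, False, False], [True, True, True]])"

lemma C7_eq_set_C7_list: "C7 = set C7_list"
  by (auto simp: C7_def C7_list_def C3_def binstrings_eq_set_n_lists)

lemma distinct_C7_list: "distinct C7_list"
  by code_simp

lemma C7_list_subset_Gamma7_list: "set C7_list \<subseteq> set Gamma7_list"
  by code_simp

lemma Gamma7_list_covered_once:
  "\<forall>v \<in> set Gamma7_list.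
     length (filter (\<lambda>c. v = c \<or> length c = length v \<and> hamming_dist c v = 1) C7_list) = 1"
  by code_simp

theorem mainTheorem4:
  shows "perfect_code (Gamma_verts 7 5) cube_adj C7"
  using C7_list_subset_Gamma7_list Gamma7_list_covered_once
  unfolding Gamma_verts_eq_set_filter C7_eq_set_C7_list perfect_code_set_iff[OF distinct_C7_list]
    cube_adj_iff_hamming_dist Gamma7_list_def[symmetric]
  by simp

end
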